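(* Let $n\ge1$ and suppose $\alpha>0$ and $T$ are real constants. Then for $s<t\le T$ and $|x|\le\sqrt{T-t}$, $$\int_{|y|<\sqrt{T-s}}\Phi(x-y,t-s)^{\alpha/n}\,dy\ge\frac{C}{(t-s)^{(\alpha-n)/2}},$$ where $C=C(n,\alpha)$ is a positive constant.
   Context: $\Phi$ is the heat kernel: $\Phi(x,t)=(4\pi t)^{-n/2}e^{-|x|^2/(4t)}$ for $t>0$ and $\Phi(x,t)=0$ for $t\le0$. *)

theory Defs
  imports "HOL-Analysis.Analysis"
begin

definition heat_kernel :: "'a::euclidean_space \<Rightarrow> real \<Rightarrow> real" where
  "heat_kernel x t =
     (if t > 0 then (4 * pi * t) powr (- real DIM('a) / 2) * exp (- (norm x)\<^sup>2 / (4 * t)) else 0)"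

end

theory Submission
  imports Defs
begin

text \<open>Write \<open>\<tau> = t - s\<close>. Inside \<open>B(0, \<surd>(T - s))\<close> there is a ball of radius \<open>\<surd>\<tau>\<close> whose
  points are within \<open>2\<surd>\<tau>\<close> of \<open>x\<close>; there \<open>\<Phi>(x - y, \<tau>) \<ge> e^(-1) (4\<pi>\<tau>)^(-n/2)\<close>. Raising this
  floor to the power \<open>\<alpha>/n\<close> gives a constant times \<open>\<tau>^(-\<alpha>/2)\<close>, and the ball has volume
  \<open>\<omega>\<^sub>n \<tau>^(n/2)\<close>.\<close>

lemma continuous_integrable_on_bounded_borel:
  fixes f :: "'a::euclidean_space \<Rightarrow> real"
  assumes "continuous_on UNIV f" "bounded S" "S \<in> sets borel"
  shows "f integrable_on S"
proof -
  obtain a where a: "S \<subseteq> cbox (-a) a"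
    using bounded_subset_cbox_symmetric assms(2) by blast
  have "f absolutely_integrable_on cbox (-a) a"
    by (rule absolutely_integrable_continuous) (meson assms(1) continuous_on_subset subset_UNIV)
  then have "f absolutely_integrable_on S"
    by (rule set_integrable_subset[OF _ _ a]) (use assms(3) in simp)
  then show ?thesis
    using absolutely_integrable_on_def by blast
qed

lemma integral_const_bounded_borel:
  fixes S :: "'a::euclidean_space set"
  assumes "bounded S" "S \<in> sets borel"
  shows "integral S (\<lambda>_. c) = c * measure lborel S"
proof -
  have "((\<lambda>_. 1) has_integral measure lborel S) S"
    by (rule has_integral_measure_lborel) (use assms emeasure_bounded_finite in auto)
  from has_integral_mult_right[OF this, of c] show ?thesis
    by (simp add: integral_unique)
qed

lemma measure_mult_le_integral:
  fixes f :: "'a::euclidean_space \<Rightarrow> real"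
  assumes f: "continuous_on UNIV f" "\<And>y. 0 \<le> f y"
    and ST: "S \<subseteq> T" "bounded T" "S \<in> sets borel" "T \<in> sets borel"
    and m: "\<And>y. y \<in> S \<Longrightarrow> m \<le> f y"
  shows "m * measure lborel S \<le> integral T f"
proof -
  have S: "bounded S"
    using ST bounded_subset by blast
  have "m * measure lborel S = integral S (\<lambda>_. m)"
    using integral_const_bounded_borel[OF S ST(3)] by simp
  also have "\<dots> \<le> integral S f"
    by (rule integral_le)
      (use m continuous_integrable_on_bounded_borel[OF _ S ST(3)] f(1) in auto)
  also have "\<dots> \<le> integral T f"
    by (rule integral_subset_le[OF ST(1)])
      (use continuous_integrable_on_bounded_borel[OF f(1)] S ST f(2) in auto)
  finally show ?thesis .
qed

lemma exists_ball_near_point_within_ball: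
  fixes x :: "'a::euclidean_space"
  assumes "0 \<le> r" "r \<le> R" "norm x \<le> R"
  shows "\<exists>z. dist x z \<le> r \<and> ball z r \<subseteq> ball 0 R"
proof (cases "norm x \<le> r")
  case True
  then show ?thesis
    using assms by (intro exI[of _ 0]) auto
next
  case False
  define z where "z = (1 - r / norm x) *\<^sub>R x"
  have x: "norm x > 0"
    using False assms(1) by linarith
  have "norm z = norm x - r"
    unfolding z_def using False x by (simp add: field_simps)
  moreover have "dist x z = r"
    unfolding z_def dist_norm using x assms(1) by (simp add: algebra_simps)
  ultimately show ?thesis
    using assms(3) by (intro exI[of _ z]) (auto simp: ball_subset_ball_iff dist_norm)
qed

lemma continuous_on_heat_kernel_powr:
  assumes "t > 0"
  shows "continuous_on UNIV (\<lambda>y. heat_kernel (x - y) t powr p)"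
proof -
  have "(\<lambda>y. heat_kernel (x - y) t powr p) =
      (\<lambda>y. ((4 * pi * t) powr (- real DIM('a) / 2) * exp (- (norm (x - y))\<^sup>2 / (4 * t))) powr p)"
    unfolding heat_kernel_def using assms by simp
  then show ?thesis
    using assms by (simp only:) (intro continuous_intros; simp)
qed

lemma heat_kernel_ge_near_origin:
  fixes v :: "'a::euclidean_space"
  assumes "t > 0" "norm v \<le> 2 * sqrt t"
  shows "(4 * pi * t) powr (- real DIM('a) / 2) * exp (- 1) \<le> heat_kernel v t"
proof -
  have "(norm v)\<^sup>2 \<le> (2 * sqrt t)\<^sup>2"
    using assms(2) by (intro power_mono) auto
  also have "\<dots> = 4 * t"
    using assms(1) by (simp add: power_mult_distrib)
  finally have "- 1 \<le> - (norm v)\<^sup>2 / (4 * t)"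
    using assms(1) by (simp add: field_simps)
  then show ?thesis
    unfolding heat_kernel_def using assms(1) by simp
qed

lemma kernel_floor_powr_mult_measure_ball:
  fixes z :: "'a::euclidean_space"
  defines "n \<equiv> real DIM('a)"
  assumes "t > 0"
  shows "((4 * pi * t) powr (- n / 2) * exp (- 1)) powr (\<alpha> / n) * measure lborel (ball z (sqrt t))
    = (4 * pi) powr (- \<alpha> / 2) * exp (- (\<alpha> / n)) * unit_ball_vol n / t powr ((\<alpha> - n) / 2)"
proof -
  have n: "n > 0"
    unfolding n_def by simp
  have vol: "measure lborel (ball z (sqrt t)) = unit_ball_vol n * t powr (n / 2)"
    using assms(2) unfolding n_def
    by (simp add: content_ball powr_half_sqrt[symmetric] powr_power)
  have floor: "((4 * pi * t) powr (- n / 2) * exp (- 1)) powr (\<alpha> / n)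
      = (4 * pi) powr (- \<alpha> / 2) * exp (- (\<alpha> / n)) * t powr (- \<alpha> / 2)"
    using assms(2) n by (simp add: powr_mult powr_powr exp_powr_real)
  have "((4 * pi * t) powr (- n / 2) * exp (- 1)) powr (\<alpha> / n) * measure lborel (ball z (sqrt t))
      = (4 * pi) powr (- \<alpha> / 2) * exp (- (\<alpha> / n)) * unit_ball_vol n
        * (t powr (- \<alpha> / 2) * t powr (n / 2))"
    unfolding vol floor by (simp only: ac_simps)
  also have "t powr (- \<alpha> / 2) * t powr (n / 2) = 1 / t powr ((\<alpha> - n) / 2)"
    by (simp add: powr_add[symmetric] powr_minus_divide[symmetric] diff_divide_distrib)
  finally show ?thesis
    by simp
qed

theorem lemma2p10:
  fixes \<alpha> :: real
  assumes "\<alpha> > 0"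
  shows "\<exists>C>0. \<forall>(T::real) s t (x::'a::euclidean_space).
           s < t \<and> t \<le> T \<and> norm x \<le> sqrt (T - t) \<longrightarrow>
           integral (ball 0 (sqrt (T - s)))
             (\<lambda>y. heat_kernel (x - y) (t - s) powr (\<alpha> / real DIM('a)))
           \<ge> C / (t - s) powr ((\<alpha> - real DIM('a)) / 2)"
proof (intro exI[of _ "(4 * pi) powr (- \<alpha> / 2) * exp (- (\<alpha> / DIM('a))) * unit_ball_vol DIM('a)"]
    conjI allI impI)
  fix T s t :: real and x :: 'a
  assume H: "s < t \<and> t \<le> T \<and> norm x \<le> sqrt (T - t)"
  define m where "m = ((4 * pi * (t - s)) powr (- real DIM('a) / 2) * exp (- 1)) powr (\<alpha> / DIM('a))"
  obtain z where z: "dist x z \<le> sqrt (t - s)" "ball z (sqrt (t - s)) \<subseteq> ball 0 (sqrt (T - s))"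
    using exists_ball_near_point_within_ball[of "sqrt (t - s)" "sqrt (T - s)" x] H
    by (smt (verit) real_sqrt_ge_zero real_sqrt_le_mono)
  have "m \<le> heat_kernel (x - y) (t - s) powr (\<alpha> / DIM('a))" if "y \<in> ball z (sqrt (t - s))" for y
  proof -
    have "norm (x - y) \<le> 2 * sqrt (t - s)"
      using that z(1) dist_triangle[of x y z] by (simp add: dist_norm dist_commute)
    with H have "(4 * pi * (t - s)) powr (- real DIM('a) / 2) * exp (- 1) \<le> heat_kernel (x - y) (t - s)"
      by (intro heat_kernel_ge_near_origin) auto
    then show ?thesis
      unfolding m_def using H assms by (intro powr_mono2) auto
  qed
  then have "m * measure lborel (ball z (sqrt (t - s))) \<le> integral (ball 0 (sqrt (T - s)))
      (\<lambda>y. heat_kernel (x - y) (t - s) powr (\<alpha> / DIM('a)))"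
    using H z(2) continuous_on_heat_kernel_powr[of "t - s"]
    by (intro measure_mult_le_integral) (auto simp: heat_kernel_def)
  moreover have "m * measure lborel (ball z (sqrt (t - s)))
      = (4 * pi) powr (- \<alpha> / 2) * exp (- (\<alpha> / DIM('a))) * unit_ball_vol DIM('a)
        / (t - s) powr ((\<alpha> - DIM('a)) / 2)"
    unfolding m_def by (rule kernel_floor_powr_mult_measure_ball) (use H in simp)
  ultimately show "(4 * pi) powr (- \<alpha> / 2) * exp (- (\<alpha> / DIM('a))) * unit_ball_vol DIM('a)
      / (t - s) powr ((\<alpha> - DIM('a)) / 2) \<le> integral (ball 0 (sqrt (T - s)))
      (\<lambda>y. heat_kernel (x - y) (t - s) powr (\<alpha> / DIM('a)))"
    by simp
qed (use assms in simp)

end
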